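(* Let $F$ be a recurrent set on which there exists a positive invariant probability distribution $\pi$. Let $X\subset F$ be a finite bifix code of finite $F$-degree $d$. Then $\sum_{x\in X}|x|\,\pi(x)=d$.
   Context: $A$ is a finite alphabet. $F\subset A^*$ is recurrent if it is nonempty, closed under factors, and for all $u,w\in F$ there is $v\in F$ with $uvw\in F$. An invariant probability distribution on $F$ is a map $\pi:F\to[0,1]$ with $\pi(1)=1$ ($1$ the empty word) and, for every $w\in F$, $\sum_{a\in A,\,wa\in F}\pi(wa)=\pi(w)=\sum_{a\in A,\,aw\in F}\pi(aw)$; it is positive if $\pi(w)>0$ for all $w\in F$. A bifix code is a set of nonempty words none of which is a proper prefix or proper suffix of another. A parse of $w$ with respect to $X$ is a triple $(v,x,u)$ with $w=vxu$, $v$ having no suffix in $X$, $x\in X^*$, $u$ having no prefix in $X$; $\delta_X(w)$ is their number and $d_F(X)=\max_{w\in F}\delta_X(w)$. *)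

theory Defs
  imports Complex_Main "HOL-Library.Sublist"
begin

definition factorial_set :: "'a list set \<Rightarrow> bool" where
  "factorial_set F \<longleftrightarrow> (\<forall>w\<in>F. \<forall>u. sublist u w \<longrightarrow> u \<in> F)"

definition recurrent :: "'a list set \<Rightarrow> bool" where
  "recurrent F \<longleftrightarrow> F \<noteq> {} \<and> factorial_set F \<and>
     (\<forall>u\<in>F. \<forall>w\<in>F. \<exists>v\<in>F. u @ v @ w \<in> F)"

definition invariant_prob :: "('a::finite) list set \<Rightarrow> ('a list \<Rightarrow> real) \<Rightarrow> bool" where
  "invariant_prob F \<pi> \<longleftrightarrow>
     (\<forall>w\<in>F. 0 \<le> \<pi> w \<and> \<pi> w \<le> 1) \<and> \<pi> [] = 1 \<and>
     (\<forall>w\<in>F. (\<Sum>a\<in>{a. w @ [a] \<in> F}. \<pi> (w @ [a])) = \<pi> w \<and>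
             (\<Sum>a\<in>{a. a # w \<in> F}. \<pi> (a # w)) = \<pi> w)"

definition positive_on :: "'a list set \<Rightarrow> ('a list \<Rightarrow> real) \<Rightarrow> bool" where
  "positive_on F \<pi> \<longleftrightarrow> (\<forall>w\<in>F. \<pi> w > 0)"

definition bifix_code :: "'a list set \<Rightarrow> bool" where
  "bifix_code X \<longleftrightarrow> [] \<notin> X \<and>
     (\<forall>x\<in>X. \<forall>y\<in>X. \<not> strict_prefix x y \<and> \<not> strict_suffix x y)"

definition star :: "'a list set \<Rightarrow> 'a list set" where
  "star X = {concat xs | xs. set xs \<subseteq> X}"

definition parses :: "'a list set \<Rightarrow> 'a list \<Rightarrow> ('a list \<times> 'a list \<times> 'a list) set" where
  "parses X w = {(v, x, u). w = v @ x @ u \<and> (\<forall>s. suffix s v \<longrightarrow> s \<notin> X) \<and>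
       x \<in> star X \<and> (\<forall>p. prefix p u \<longrightarrow> p \<notin> X)}"

definition delta :: "'a list set \<Rightarrow> 'a list \<Rightarrow> nat" where
  "delta X w = card (parses X w)"

definition has_F_degree :: "'a list set \<Rightarrow> 'a list set \<Rightarrow> nat \<Rightarrow> bool" where
  "has_F_degree F X d \<longleftrightarrow> (\<forall>w\<in>F. delta X w \<le> d) \<and> (\<exists>w\<in>F. delta X w = d)"

end

theory Submission
  imports Defs
begin

text \<open>
  Extend the invariant distribution \<pi> by zero outside F; invariance makes it a
  probability measure on the words of each fixed length n, consistent under deleting the first
  or last letter.  Let E(n) be the expected number of parses \<delta>(w) of a word w of length n.

  (1) Combinatorics: for a bifix code X, \<delta>(w) + (number of occurrences of code words in w)
      = |w| + 1, proved by induction on w by extending parses letter by letter.  Hence \<delta>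
      grows when a word is extended on either side.
  (2) Since the expected number of occurrences of x in a word of length n is (n + 1 - |x|)\<pi>(x),
      E(n) = (n + 1)(1 - \<pi>(X)) + \<Sigma>|x|\<pi>(x) for n at least the maximal length of code words.
  (3) E is nondecreasing (by (1)) and bounded by the degree d, so its slope 1 - \<pi>(X) vanishes
      and E is eventually constant.  As \<pi> is positive, a constant E forces \<delta>(uw) = \<delta>(w) for
      all long w and all uw in F; recurrence puts w behind a word with d parses, so \<delta>(w) = d.
      Thus E(n) = d and the theorem follows from (2).
\<close>

lemma star_Nil: "[] \<in> star X"
  unfolding star_def by (rule CollectI, rule exI[of _ "[]"]) simp

lemma star_gen: "x \<in> X \<Longrightarrow> x \<in> star X"
  unfolding star_def by (rule CollectI, rule exI[of _ "[x]"]) simp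

lemma star_append: "x \<in> star X \<Longrightarrow> y \<in> star X \<Longrightarrow> x @ y \<in> star X"
  unfolding star_def
proof safe
  fix xs ys assume "set xs \<subseteq> X" "set ys \<subseteq> X"
  then show "\<exists>zs. concat xs @ concat ys = concat zs \<and> set zs \<subseteq> X"
    by (intro exI[of _ "xs @ ys"]) auto
qed

lemma star_snoc_decomp:
  assumes "x \<in> star X" "x \<noteq> []"
  obtains x' y where "x = x' @ y" "x' \<in> star X" "y \<in> X"
proof -
  obtain xs where xs: "x = concat xs" "set xs \<subseteq> X" using assms(1) unfolding star_def by auto
  with assms(2) have "xs \<noteq> []" by auto
  then have "x = concat (butlast xs) @ last xs"
    using xs(1) by (metis append_butlast_last_id concat_append concat.simps append_Nil2)
  moreover have "concat (butlast xs) \<in> star X"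
    unfolding star_def using xs(2) by (auto dest: in_set_butlastD)
  moreover have "last xs \<in> X" using \<open>xs \<noteq> []\<close> xs(2) by auto
  ultimately show ?thesis using that by blast
qed

lemma bifix_code_Nil: "bifix_code X \<Longrightarrow> [] \<notin> X"
  unfolding bifix_code_def by blast

lemma bifix_code_suffix_unique:
  "bifix_code X \<Longrightarrow> x \<in> X \<Longrightarrow> y \<in> X \<Longrightarrow> suffix x z \<Longrightarrow> suffix y z \<Longrightarrow> x = y"
  unfolding bifix_code_def by (metis suffix_same_cases suffix_order.le_imp_less_or_eq)

lemma bifix_code_prefix_unique:
  "bifix_code X \<Longrightarrow> x \<in> X \<Longrightarrow> y \<in> X \<Longrightarrow> prefix x z \<Longrightarrow> prefix y z \<Longrightarrow> x = y"
  unfolding bifix_code_def by (metis prefix_same_cases prefix_order.le_imp_less_or_eq)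

subsection \<open>Parses of a word extended by one letter\<close>

lemma finite_parses: "finite (parses (X :: ('a::finite) list set) w)"
proof -
  let ?S = "{v :: 'a list. length v \<le> length w}"
  have "parses X w \<subseteq> ?S \<times> ?S \<times> ?S" unfolding parses_def by auto
  moreover have "finite ?S" using finite_lists_length_le[of "UNIV :: 'a set"] by simp
  ultimately show ?thesis by (meson finite_SigmaI finite_subset)
qed

definition extend_parse :: "'a list set \<Rightarrow> 'a \<Rightarrow> 'a list \<times> 'a list \<times> 'a list \<Rightarrow> 'a list \<times> 'a list \<times> 'a list"
  where "extend_parse X a = (\<lambda>(v, x, u). if u @ [a] \<in> X then (v, x @ u @ [a], []) else (v, x, u @ [a]))"

lemma extend_parse_parses:
  assumes "bifix_code X" "p \<in> parses X w"
  shows "extend_parse X a p \<in> parses X (w @ [a])"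
proof -
  obtain v x u where p: "p = (v, x, u)" by (cases p)
  with assms(2) have w: "w = v @ x @ u" and v: "\<forall>s. suffix s v \<longrightarrow> s \<notin> X"
    and x: "x \<in> star X" and u: "\<forall>q. prefix q u \<longrightarrow> q \<notin> X"
    unfolding parses_def by auto
  show ?thesis
  proof (cases "u @ [a] \<in> X")
    case True
    then have "x @ u @ [a] \<in> star X" by (intro star_append x star_gen)
    with True show ?thesis
      using w v bifix_code_Nil[OF assms(1)] unfolding p extend_parse_def parses_def by auto
  next
    case False
    with u have "\<forall>q. prefix q (u @ [a]) \<longrightarrow> q \<notin> X" by (auto simp: prefix_snoc)
    with False show ?thesis using w v x unfolding p extend_parse_def parses_def by auto
  qed
qed

lemma inj_on_extend_parse:
  assumes "bifix_code X"
  shows "inj_on (extend_parse X a) (parses X w)"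
proof (rule inj_onI)
  fix p q assume "p \<in> parses X w" "q \<in> parses X w" and eq: "extend_parse X a p = extend_parse X a q"
  obtain v x u v' x' u' where pq: "p = (v, x, u)" "q = (v', x', u')" by (cases p, cases q)
  have "u = u'" if "u @ [a] \<in> X" "u' @ [a] \<in> X"
  proof -
    from eq that have "x @ u @ [a] = x' @ u' @ [a]" unfolding pq extend_parse_def by simp
    then have "suffix (u @ [a]) (x @ u @ [a])" "suffix (u' @ [a]) (x @ u @ [a])"
      by (auto simp: suffix_def)
    then show ?thesis using bifix_code_suffix_unique[OF assms that] by simp
  qed
  with eq show "p = q" unfolding pq extend_parse_def by (auto split: if_splits)
qed

lemma parses_snoc_cases:
  assumes "bifix_code X" "t \<in> parses X (w @ [a])"
  shows "t = (w @ [a], [], []) \<or> t \<in> extend_parse X a ` parses X w"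
proof -
  obtain v x u' where t: "t = (v, x, u')" by (cases t)
  with assms(2) have wa: "w @ [a] = v @ x @ u'" and v: "\<forall>s. suffix s v \<longrightarrow> s \<notin> X"
    and x: "x \<in> star X" and u': "\<forall>q. prefix q u' \<longrightarrow> q \<notin> X"
    unfolding parses_def by auto
  consider (right) u where "u' = u @ [a]" | (middle) "u' = []" "x \<noteq> []" | (left) "u' = []" "x = []"
    using wa by (cases u' rule: rev_cases) auto
  then show ?thesis
  proof cases
    case right
    then have "(v, x, u) \<in> parses X w" "u @ [a] \<notin> X"
      using wa v x u' unfolding parses_def by (auto simp: prefix_snoc)
    then show ?thesis unfolding t right extend_parse_def by force
  next
    case middle
    then obtain x' y where xy: "x = x' @ y" "x' \<in> star X" "y \<in> X"
      using star_snoc_decomp[OF x] by blast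
    then have "y \<noteq> []" using bifix_code_Nil[OF assms(1)] by auto
    with wa middle xy obtain u where u: "y = u @ [a]" by (cases y rule: rev_cases) auto
    have "\<forall>q. prefix q u \<longrightarrow> q \<notin> X"
    proof (intro allI impI notI)
      fix q assume "prefix q u" "q \<in> X"
      moreover have "strict_prefix u y" unfolding u by (simp add: strict_prefix_def)
      ultimately have "strict_prefix q y" using prefix_order.le_less_trans by blast
      with \<open>q \<in> X\<close> xy(3) assms(1) show False unfolding bifix_code_def by blast
    qed
    then have "(v, x', u) \<in> parses X w" using wa middle xy u v unfolding parses_def by auto
    moreover have "extend_parse X a (v, x', u) = t" using xy u middle unfolding t extend_parse_def by simp
    ultimately show ?thesis by blast
  next
    case left
    then show ?thesis using wa unfolding t by simp
  qed
qed

lemma card_parses_snoc: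
  fixes X :: "('a::finite) list set"
  assumes "bifix_code X"
  shows "card (parses X (w @ [a])) = card (parses X w) + (if \<exists>s\<in>X. suffix s (w @ [a]) then 0 else 1)"
proof -
  define T where "T = (if \<exists>s\<in>X. suffix s (w @ [a]) then {} else {(w @ [a], [] :: 'a list, [] :: 'a list)})"
  have "T \<subseteq> parses X (w @ [a])"
    using star_Nil bifix_code_Nil[OF assms] unfolding T_def parses_def by auto
  moreover have "parses X (w @ [a]) \<subseteq> extend_parse X a ` parses X w \<union> T"
  proof
    fix t assume t: "t \<in> parses X (w @ [a])"
    show "t \<in> extend_parse X a ` parses X w \<union> T"
    proof (cases "t \<in> extend_parse X a ` parses X w")
      case False
      with parses_snoc_cases[OF assms t] have "t = (w @ [a], [], [])" by blast
      moreover from this t have "\<not> (\<exists>s\<in>X. suffix s (w @ [a]))" unfolding parses_def by auto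
      ultimately show ?thesis unfolding T_def by (simp del: suffix_snoc)
    qed blast
  qed
  moreover have "extend_parse X a ` parses X w \<subseteq> parses X (w @ [a])"
    using extend_parse_parses[OF assms] by blast
  ultimately have decomp: "parses X (w @ [a]) = extend_parse X a ` parses X w \<union> T" by blast
  have "(w @ [a], [], []) \<notin> extend_parse X a ` parses X w"
    unfolding extend_parse_def by (auto split: if_splits)
  then have "extend_parse X a ` parses X w \<inter> T = {}" unfolding T_def by auto
  then have "card (parses X (w @ [a])) = card (extend_parse X a ` parses X w) + card T"
    unfolding decomp by (intro card_Un_disjoint) (auto simp: finite_parses T_def)
  also have "\<dots> = card (parses X w) + card T"
    using card_image[OF inj_on_extend_parse[OF assms]] by simp
  finally show ?thesis unfolding T_def by (simp del: suffix_snoc)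
qed

subsection \<open>Occurrences and the parse count\<close>

lemma prefix_iff_take: "prefix x z \<longleftrightarrow> length x \<le> length z \<and> take (length x) z = x"
proof
  assume "prefix x z"
  then obtain zs where "z = x @ zs" unfolding prefix_def by blast
  then show "length x \<le> length z \<and> take (length x) z = x" by simp
next
  assume "length x \<le> length z \<and> take (length x) z = x"
  then show "prefix x z" unfolding prefix_def by (metis append_take_drop_id)
qed

lemma suffix_iff_drop: "suffix x z \<longleftrightarrow> length x \<le> length z \<and> drop (length z - length x) z = x"
proof
  assume "suffix x z"
  then obtain zs where "z = zs @ x" unfolding suffix_def by blast
  then show "length x \<le> length z \<and> drop (length z - length x) z = x" by simp
next
  assume "length x \<le> length z \<and> drop (length z - length x) z = x"
  then show "suffix x z" unfolding suffix_def by (metis append_take_drop_id)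
qed

definition occ_positions :: "'a list \<Rightarrow> 'a list \<Rightarrow> nat set" where
  "occ_positions x w = {i. i + length x \<le> length w \<and> take (length x) (drop i w) = x}"

definition occ :: "'a list \<Rightarrow> 'a list \<Rightarrow> nat" where
  "occ x w = card (occ_positions x w)"

lemma finite_occ_positions: "finite (occ_positions x w)"
  by (rule finite_subset[of _ "{..length w}"]) (auto simp: occ_positions_def)

lemma occ_positions_snoc:
  "occ_positions x (w @ [a]) =
     occ_positions x w \<union> (if suffix x (w @ [a]) then {Suc (length w) - length x} else {})"
proof (rule set_eqI)
  fix i
  show "i \<in> occ_positions x (w @ [a]) \<longleftrightarrow>
    i \<in> occ_positions x w \<union> (if suffix x (w @ [a]) then {Suc (length w) - length x} else {})"
  proof (cases "i + length x \<le> length w")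
    case True
    then show ?thesis by (auto simp: occ_positions_def suffix_iff_drop)
  next
    case False
    then have "i \<in> occ_positions x (w @ [a]) \<longleftrightarrow> i + length x = Suc (length w) \<and> drop i (w @ [a]) = x"
      by (auto simp: occ_positions_def)
    also have "\<dots> \<longleftrightarrow> suffix x (w @ [a]) \<and> i = Suc (length w) - length x"
      using suffix_iff_drop[of x "w @ [a]"] by auto
    finally show ?thesis using False by (auto simp: occ_positions_def simp del: suffix_snoc)
  qed
qed

lemma occ_positions_Cons:
  "occ_positions x (a # w) = Suc ` occ_positions x w \<union> (if prefix x (a # w) then {0} else {})"
proof (rule set_eqI)
  fix i
  show "i \<in> occ_positions x (a # w) \<longleftrightarrow>
    i \<in> Suc ` occ_positions x w \<union> (if prefix x (a # w) then {0} else {})"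
    by (cases i) (auto simp: occ_positions_def prefix_iff_take simp del: prefix_Cons)
qed

lemma occ_snoc:
  assumes "x \<noteq> []"
  shows "occ x (w @ [a]) = occ x w + (if suffix x (w @ [a]) then 1 else 0)"
proof (cases "suffix x (w @ [a])")
  case True
  then have "length x \<le> Suc (length w)" using suffix_length_le by fastforce
  with assms have "Suc (length w) - length x \<notin> occ_positions x w"
    by (simp add: occ_positions_def)
  then show ?thesis
    unfolding occ_def occ_positions_snoc using True by (simp add: finite_occ_positions)
qed (simp add: occ_def occ_positions_snoc del: suffix_snoc)

lemma occ_Cons: "occ x (a # w) = occ x w + (if prefix x (a # w) then 1 else 0)"
proof -
  have "0 \<notin> Suc ` occ_positions x w" by auto
  then show ?thesis
    unfolding occ_def occ_positions_Cons
    by (simp add: finite_occ_positions card_image del: prefix_Cons)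
qed

definition code_occ :: "'a list set \<Rightarrow> 'a list \<Rightarrow> nat" where
  "code_occ X w = (\<Sum>x\<in>X. occ x w)"

lemma sum_indicator_unique:
  assumes "finite A" "\<And>x y. x \<in> A \<Longrightarrow> y \<in> A \<Longrightarrow> P x \<Longrightarrow> P y \<Longrightarrow> x = y"
  shows "(\<Sum>x\<in>A. if P x then 1 else 0) = (if \<exists>x\<in>A. P x then 1 else (0 :: nat))"
proof (cases "\<exists>x\<in>A. P x")
  case True
  then obtain x0 where x0: "x0 \<in> A" "P x0" by blast
  have "(\<Sum>x\<in>A. if P x then 1 else 0) = (\<Sum>x\<in>A. if x = x0 then 1 else (0 :: nat))"
    using assms(2) x0 by (intro sum.cong) auto
  with True x0 assms(1) show ?thesis by simp
qed simp

lemma code_occ_snoc: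
  assumes "bifix_code X" "finite X"
  shows "code_occ X (w @ [a]) = code_occ X w + (if \<exists>x\<in>X. suffix x (w @ [a]) then 1 else 0)"
proof -
  have "code_occ X (w @ [a]) = (\<Sum>x\<in>X. occ x w + (if suffix x (w @ [a]) then 1 else 0))"
    unfolding code_occ_def using bifix_code_Nil[OF assms(1)]
    by (intro sum.cong refl occ_snoc) auto
  also have "\<dots> = code_occ X w + (if \<exists>x\<in>X. suffix x (w @ [a]) then 1 else 0)"
    unfolding sum.distrib code_occ_def
    using sum_indicator_unique[OF assms(2), of "\<lambda>x. suffix x (w @ [a])"]
      bifix_code_suffix_unique[OF assms(1)] by (simp del: suffix_snoc)
  finally show ?thesis .
qed

lemma code_occ_Cons:
  assumes "bifix_code X" "finite X"
  shows "code_occ X (a # w) = code_occ X w + (if \<exists>x\<in>X. prefix x (a # w) then 1 else 0)"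
proof -
  have "code_occ X (a # w) = (\<Sum>x\<in>X. occ x w + (if prefix x (a # w) then 1 else 0))"
    unfolding code_occ_def by (intro sum.cong refl occ_Cons)
  also have "\<dots> = code_occ X w + (if \<exists>x\<in>X. prefix x (a # w) then 1 else 0)"
    unfolding sum.distrib code_occ_def
    using sum_indicator_unique[OF assms(2), of "\<lambda>x. prefix x (a # w)"]
      bifix_code_prefix_unique[OF assms(1)] by (simp del: prefix_Cons)
  finally show ?thesis .
qed

lemma delta_plus_code_occ:
  fixes X :: "('a::finite) list set"
  assumes "bifix_code X" "finite X"
  shows "delta X w + code_occ X w = length w + 1"
proof (induction w rule: rev_induct)
  case Nil
  have "parses X [] = {([], [], [])}"
    using bifix_code_Nil[OF assms(1)] star_Nil unfolding parses_def by auto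
  moreover have "code_occ X [] = 0"
    using bifix_code_Nil[OF assms(1)] unfolding code_occ_def occ_def occ_positions_def
    by (intro sum.neutral) auto
  ultimately show ?case unfolding delta_def by simp
next
  case (snoc a w)
  then show ?case
    unfolding delta_def card_parses_snoc[OF assms(1)] code_occ_snoc[OF assms]
    by (simp del: suffix_snoc)
qed

lemma delta_sublist_mono:
  fixes X :: "('a::finite) list set"
  assumes "bifix_code X" "finite X" "sublist w z"
  shows "delta X w \<le> delta X z"
proof -
  have left: "delta X w \<le> delta X (u @ w)" for u w
  proof (induction u)
    case (Cons a u)
    with delta_plus_code_occ[OF assms(1,2), of "u @ w"] delta_plus_code_occ[OF assms(1,2), of "a # u @ w"]
    show ?case using code_occ_Cons[OF assms(1,2), of a "u @ w"] by (simp split: if_splits del: prefix_Cons)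
  qed simp
  have right: "delta X w \<le> delta X (w @ v)" for w v
  proof (induction v rule: rev_induct)
    case (snoc a v)
    with delta_plus_code_occ[OF assms(1,2), of "w @ v"] delta_plus_code_occ[OF assms(1,2), of "w @ v @ [a]"]
    show ?case using code_occ_snoc[OF assms(1,2), of "w @ v" a] by (simp split: if_splits del: suffix_snoc)
  qed simp
  from assms(3) obtain u v where "z = u @ w @ v" by (auto simp: sublist_def)
  with left right show ?thesis by (metis append_assoc order_trans)
qed

subsection \<open>Invariant distributions as measures on words of fixed length\<close>

abbreviation words :: "nat \<Rightarrow> ('a::finite) list set" where
  "words n \<equiv> {w. length w = n}"

lemma sum_words_Suc_Cons: "(\<Sum>w\<in>words (Suc n). g w) = (\<Sum>a\<in>UNIV. \<Sum>w\<in>words n. g (a # w))"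
proof -
  have img: "words (Suc n) = (\<lambda>(a, w). a # w) ` (UNIV \<times> words n)"
    by (auto simp: image_iff length_Suc_conv)
  have inj: "inj_on (\<lambda>(a, w). a # w) (UNIV \<times> words n)" by (auto simp: inj_on_def)
  have "(\<Sum>w\<in>words (Suc n). g w) = (\<Sum>(a, w)\<in>UNIV \<times> words n. g (a # w))"
    unfolding img using sum.reindex[OF inj, of g] by (simp add: comp_def split_def)
  then show ?thesis by (simp add: sum.cartesian_product)
qed

lemma sum_words_Suc_snoc: "(\<Sum>w\<in>words (Suc n). g w) = (\<Sum>w\<in>words n. \<Sum>a\<in>UNIV. g (w @ [a]))"
proof -
  have img: "words (Suc n) = (\<lambda>(w, a). w @ [a]) ` (words n \<times> UNIV)"
    by (auto simp: image_iff length_Suc_conv_rev)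
  have inj: "inj_on (\<lambda>(w, a). w @ [a]) (words n \<times> UNIV)" by (auto simp: inj_on_def)
  have "(\<Sum>w\<in>words (Suc n). g w) = (\<Sum>(w, a)\<in>words n \<times> UNIV. g (w @ [a]))"
    unfolding img using sum.reindex[OF inj, of g] by (simp add: comp_def split_def)
  then show ?thesis by (simp add: sum.cartesian_product)
qed

definition weight :: "'a list set \<Rightarrow> ('a list \<Rightarrow> real) \<Rightarrow> 'a list \<Rightarrow> real" where
  "weight F \<pi> w = (if w \<in> F then \<pi> w else 0)"

context
  fixes F :: "('a::finite) list set" and \<pi> :: "'a list \<Rightarrow> real"
  assumes factorial: "factorial_set F" and nonempty: "F \<noteq> {}" and invariant: "invariant_prob F \<pi>"
begin

lemma weight_nonneg: "0 \<le> weight F \<pi> w"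
  using invariant unfolding weight_def invariant_prob_def by auto

lemma weight_marginal_left: "(\<Sum>a\<in>UNIV. weight F \<pi> (a # w)) = weight F \<pi> w"
proof (cases "w \<in> F")
  case True
  have "(\<Sum>a\<in>UNIV. weight F \<pi> (a # w)) = (\<Sum>a\<in>{a. a # w \<in> F}. \<pi> (a # w))"
    unfolding weight_def by (simp add: sum.inter_filter[symmetric])
  also have "\<dots> = \<pi> w" using invariant True unfolding invariant_prob_def by blast
  finally show ?thesis unfolding weight_def using True by simp
next
  case False
  then have "a # w \<notin> F" for a
    using factorial unfolding factorial_set_def by (metis append_Cons append_Nil sublist_append_leftI)
  with False show ?thesis unfolding weight_def by simp
qed

lemma weight_marginal_right: "(\<Sum>a\<in>UNIV. weight F \<pi> (w @ [a])) = weight F \<pi> w"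
proof (cases "w \<in> F")
  case True
  have "(\<Sum>a\<in>UNIV. weight F \<pi> (w @ [a])) = (\<Sum>a\<in>{a. w @ [a] \<in> F}. \<pi> (w @ [a]))"
    unfolding weight_def by (simp add: sum.inter_filter[symmetric])
  also have "\<dots> = \<pi> w" using invariant True unfolding invariant_prob_def by blast
  finally show ?thesis unfolding weight_def using True by simp
next
  case False
  then have "w @ [a] \<notin> F" for a
    using factorial unfolding factorial_set_def by (metis sublist_append_rightI)
  with False show ?thesis unfolding weight_def by simp
qed

lemma sum_weight_drop:
  "j \<le> n \<Longrightarrow> (\<Sum>w\<in>words n. weight F \<pi> w * f (drop j w)) = (\<Sum>u\<in>words (n - j). weight F \<pi> u * f u)"
proof (induction j arbitrary: n)
  case (Suc j)
  then obtain m where m: "n = Suc m" "j \<le> m" by (cases n) auto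
  have "(\<Sum>w\<in>words n. weight F \<pi> w * f (drop (Suc j) w))
      = (\<Sum>w\<in>words m. (\<Sum>a\<in>UNIV. weight F \<pi> (a # w)) * f (drop j w))"
    unfolding m(1) sum_words_Suc_Cons by (subst sum.swap) (simp add: sum_distrib_right)
  also have "\<dots> = (\<Sum>u\<in>words (m - j). weight F \<pi> u * f u)"
    using Suc.IH m(2) by (simp add: weight_marginal_left)
  finally show ?case using m by simp
qed simp

lemma sum_weight_take:
  "k \<le> n \<Longrightarrow> (\<Sum>w\<in>words n. weight F \<pi> w * f (take k w)) = (\<Sum>u\<in>words k. weight F \<pi> u * f u)"
proof (induction n)
  case (Suc n)
  show ?case
  proof (cases "k = Suc n")
    case False
    with Suc.prems have k: "k \<le> n" by simp
    have "(\<Sum>w\<in>words (Suc n). weight F \<pi> w * f (take k w))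
        = (\<Sum>w\<in>words n. (\<Sum>a\<in>UNIV. weight F \<pi> (w @ [a])) * f (take k w))"
      unfolding sum_words_Suc_snoc using k by (simp add: sum_distrib_right)
    then show ?thesis using Suc.IH k by (simp add: weight_marginal_right)
  qed (intro sum.cong; simp)
qed simp

lemma sum_weight_words: "(\<Sum>w\<in>words n. weight F \<pi> w) = 1"
proof -
  have "[] \<in> F" using factorial nonempty unfolding factorial_set_def by auto
  have "(\<Sum>w\<in>words n. weight F \<pi> w) = (\<Sum>u\<in>words 0. weight F \<pi> u)"
    using sum_weight_drop[of n n "\<lambda>_. 1"] by simp
  also have "\<dots> = weight F \<pi> []" by simp
  also have "\<dots> = 1" using \<open>[] \<in> F\<close> invariant unfolding weight_def invariant_prob_def by simp
  finally show ?thesis .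
qed

lemma sum_weight_window:
  assumes "i + length x \<le> n"
  shows "(\<Sum>w\<in>words n. weight F \<pi> w * (if take (length x) (drop i w) = x then 1 else 0)) = weight F \<pi> x"
proof -
  have "(\<Sum>w\<in>words n. weight F \<pi> w * (if take (length x) (drop i w) = x then 1 else 0))
      = (\<Sum>u\<in>words (n - i). weight F \<pi> u * (if take (length x) u = x then 1 else 0))"
    using sum_weight_drop[of i n "\<lambda>u. if take (length x) u = x then 1 else 0"] assms by simp
  also have "\<dots> = (\<Sum>u\<in>words (length x). weight F \<pi> u * (if u = x then 1 else 0))"
    using sum_weight_take[of "length x" "n - i" "\<lambda>u. if u = x then 1 else 0"] assms by simp
  also have "\<dots> = weight F \<pi> x"
    by (simp add: if_distrib[of "\<lambda>c. weight F \<pi> _ * c"] sum.delta finite_list_length cong: if_cong)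
  finally show ?thesis .
qed

text \<open>Expected number of occurrences of x in a word of length n: one chance per position.\<close>
lemma sum_weight_occ:
  assumes "length x \<le> n"
  shows "(\<Sum>w\<in>words n. weight F \<pi> w * real (occ x w)) = real (n + 1 - length x) * weight F \<pi> x"
proof -
  let ?I = "{..n - length x}" and ?hit = "\<lambda>i w. if take (length x) (drop i w) = x then 1 else 0"
  have "real (occ x w) = (\<Sum>i\<in>?I. ?hit i w)" if "w \<in> words n" for w
  proof -
    have "occ_positions x w = {i\<in>?I. take (length x) (drop i w) = x}"
      using that assms unfolding occ_positions_def by auto
    then show ?thesis unfolding occ_def by (simp add: sum.inter_filter[symmetric])
  qed
  then have "(\<Sum>w\<in>words n. weight F \<pi> w * real (occ x w)) = (\<Sum>w\<in>words n. \<Sum>i\<in>?I. weight F \<pi> w * ?hit i w)"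
    by (simp add: sum_distrib_left)
  also have "\<dots> = (\<Sum>i\<in>?I. \<Sum>w\<in>words n. weight F \<pi> w * ?hit i w)"
    by (rule sum.swap)
  also have "\<dots> = (\<Sum>i\<in>?I. weight F \<pi> x)"
    using assms by (intro sum.cong refl sum_weight_window) auto
  also have "\<dots> = real (n + 1 - length x) * weight F \<pi> x" using assms by simp
  finally show ?thesis .
qed

subsection \<open>The expected number of parses\<close>

definition expected_delta :: "'a list set \<Rightarrow> nat \<Rightarrow> real" where
  "expected_delta X n = (\<Sum>w\<in>words n. weight F \<pi> w * real (delta X w))"

lemma expected_delta_affine:
  assumes "bifix_code X" "finite X" "X \<subseteq> F" "\<forall>x\<in>X. length x \<le> n"
  shows "expected_delta X n = real (n + 1) * (1 - (\<Sum>x\<in>X. \<pi> x)) + (\<Sum>x\<in>X. real (length x) * \<pi> x)"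
proof -
  have delta: "real (delta X w) = real (n + 1) - (\<Sum>x\<in>X. real (occ x w))" if "w \<in> words n" for w
  proof -
    have "real (delta X w) + real (code_occ X w) = real (n + 1)"
      using delta_plus_code_occ[OF assms(1,2), of w] that by (simp flip: of_nat_add)
    then show ?thesis unfolding code_occ_def of_nat_sum by linarith
  qed
  have occ: "(\<Sum>w\<in>words n. weight F \<pi> w * real (occ x w)) = real (n + 1 - length x) * \<pi> x"
    if "x \<in> X" for x
    using sum_weight_occ[of x n] assms(3,4) that
    unfolding weight_def by auto
  have "expected_delta X n
      = (\<Sum>w\<in>words n. real (n + 1) * weight F \<pi> w - (\<Sum>x\<in>X. weight F \<pi> w * real (occ x w)))"
    unfolding expected_delta_def
    by (intro sum.cong refl) (simp add: delta right_diff_distrib sum_distrib_left)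
  also have "\<dots> = real (n + 1) * (\<Sum>w\<in>words n. weight F \<pi> w)
      - (\<Sum>x\<in>X. \<Sum>w\<in>words n. weight F \<pi> w * real (occ x w))"
    by (simp add: sum_subtractf sum_distrib_left sum.swap[of _ X])
  also have "\<dots> = real (n + 1) - (\<Sum>x\<in>X. real (n + 1) * \<pi> x - real (length x) * \<pi> x)"
  proof -
    have "real (n + 1 - length x) * \<pi> x = real (n + 1) * \<pi> x - real (length x) * \<pi> x" if "x \<in> X" for x
    proof -
      have "length x \<le> n + 1" using assms(4) that by fastforce
      then show ?thesis by (simp only: of_nat_diff left_diff_distrib)
    qed
    then show ?thesis
      by (simp add: sum_weight_words occ cong: sum.cong)
  qed
  also have "\<dots> = real (n + 1) * (1 - (\<Sum>x\<in>X. \<pi> x)) + (\<Sum>x\<in>X. real (length x) * \<pi> x)"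
    by (simp add: sum_subtractf sum_distrib_left right_diff_distrib)
  finally show ?thesis .
qed

lemma expected_delta_le_degree:
  assumes "has_F_degree F X d"
  shows "expected_delta X n \<le> real d"
proof -
  have "expected_delta X n \<le> (\<Sum>w\<in>words n. weight F \<pi> w * real d)"
    unfolding expected_delta_def
  proof (rule sum_mono)
    fix w :: "'a list"
    show "weight F \<pi> w * real (delta X w) \<le> weight F \<pi> w * real d"
      using assms weight_nonneg[of w]
      by (cases "w \<in> F") (auto simp: has_F_degree_def weight_def intro: mult_left_mono)
  qed
  also have "\<dots> = real d"
    by (simp add: sum_distrib_right[symmetric] sum_weight_words)
  finally show ?thesis .
qed

lemma expected_delta_eq_if_constant:
  assumes "\<And>w. w \<in> F \<Longrightarrow> length w = n \<Longrightarrow> delta X w = d"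
  shows "expected_delta X n = real d"
proof -
  have "expected_delta X n = (\<Sum>w\<in>words n. weight F \<pi> w * real d)"
    unfolding expected_delta_def using assms by (intro sum.cong) (auto simp: weight_def)
  also have "\<dots> = real d" by (simp add: sum_distrib_right[symmetric] sum_weight_words)
  finally show ?thesis .
qed

lemma expected_delta_shift:
  "expected_delta X (m + n) - expected_delta X n
     = (\<Sum>z\<in>words (m + n). weight F \<pi> z * (real (delta X z) - real (delta X (drop m z))))"
  using sum_weight_drop[of m "m + n" "\<lambda>u. real (delta X u)"]
  unfolding expected_delta_def by (simp add: right_diff_distrib sum_subtractf)

lemma expected_delta_shift_terms_nonneg:
  assumes "bifix_code X" "finite X"
  shows "0 \<le> weight F \<pi> z * (real (delta X z) - real (delta X (drop m z)))"
  using delta_sublist_mono[OF assms, of "drop m z" z] weight_nonneg[of z]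
  by (simp add: suffix_imp_sublist)

lemma expected_delta_mono:
  assumes "bifix_code X" "finite X"
  shows "expected_delta X n \<le> expected_delta X (m + n)"
proof -
  have "0 \<le> (\<Sum>z\<in>words (m + n). weight F \<pi> z * (real (delta X z) - real (delta X (drop m z))))"
    by (intro sum_nonneg expected_delta_shift_terms_nonneg[OF assms])
  then show ?thesis using expected_delta_shift[of X m n] by simp
qed

lemma delta_drop_eq_if_stationary:
  assumes "bifix_code X" "finite X" "positive_on F \<pi>"
    and "expected_delta X (m + n) = expected_delta X n" "z \<in> F" "length z = m + n"
  shows "delta X (drop m z) = delta X z"
proof -
  have "(\<Sum>z\<in>words (m + n). weight F \<pi> z * (real (delta X z) - real (delta X (drop m z)))) = 0"
    using expected_delta_shift[of X m n] assms(4) by simp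
  then have "weight F \<pi> z * (real (delta X z) - real (delta X (drop m z))) = 0"
    using assms(6) expected_delta_shift_terms_nonneg[OF assms(1,2)]
    by (subst (asm) sum_nonneg_eq_0_iff) (auto simp: finite_list_length)
  moreover have "weight F \<pi> z > 0" using assms(3,5) unfolding positive_on_def weight_def by simp
  ultimately show ?thesis by simp
qed

end

lemma affine_seq_slope_zero:
  fixes f :: "nat \<Rightarrow> real"
  assumes affine: "\<And>n. L \<le> n \<Longrightarrow> f n = real (n + 1) * c + s"
    and bounded: "\<And>n. f n \<le> B" and step: "f L \<le> f (Suc L)"
  shows "c = 0"
proof -
  have "0 \<le> c" using step affine[of L] affine[of "Suc L"] by (simp add: algebra_simps)
  moreover have "\<not> 0 < c"
  proof
    assume "0 < c"
    then obtain m where m: "B - s < real m * c" using ex_less_of_nat_mult by blast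
    have "real m * c \<le> real (m + L + 1) * c" using \<open>0 < c\<close> by (simp add: mult_right_mono)
    then show False using bounded[of "m + L"] affine[of "m + L"] m by simp
  qed
  ultimately show ?thesis by simp
qed

text \<open>In a recurrent set, a word whose parse count is unchanged by every extension to the left
  inside F has the maximal number d of parses: it is a suffix of an extension of a word with
  d parses.\<close>
lemma delta_eq_degree_if_left_stable:
  fixes X :: "('a::finite) list set"
  assumes "recurrent F" "bifix_code X" "finite X" "has_F_degree F X d" "w \<in> F"
    and stable: "\<And>u. u @ w \<in> F \<Longrightarrow> delta X (u @ w) = delta X w"
  shows "delta X w = d"
proof -
  obtain w0 where w0: "w0 \<in> F" "delta X w0 = d" using assms(4) unfolding has_F_degree_def by blast
  then obtain v where z: "(w0 @ v) @ w \<in> F" using assms(1,5) unfolding recurrent_def by auto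
  have "d \<le> delta X ((w0 @ v) @ w)"
    using delta_sublist_mono[OF assms(2,3), of w0 "(w0 @ v) @ w"] w0(2) by simp
  moreover have "delta X ((w0 @ v) @ w) \<le> d" using assms(4) z unfolding has_F_degree_def by blast
  ultimately show ?thesis using stable[OF z] by simp
qed

theorem mainTheorem6:
  fixes F X :: "('a::finite) list set" and \<pi> :: "'a list \<Rightarrow> real" and d :: nat
  assumes "recurrent F"
    and "invariant_prob F \<pi>" and "positive_on F \<pi>"
    and "X \<subseteq> F" and "finite X" and "bifix_code X"
    and "has_F_degree F X d"
  shows "(\<Sum>x\<in>X. real (length x) * \<pi> x) = real d"
proof -
  have fac: "factorial_set F" and ne: "F \<noteq> {}" using assms(1) unfolding recurrent_def by auto
  let ?E = "expected_delta F \<pi> X" and ?S = "\<Sum>x\<in>X. real (length x) * \<pi> x"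
  define L where "L = Max (insert 0 (length ` X))"
  have L: "\<forall>x\<in>X. length x \<le> n" if "L \<le> n" for n
    using that assms(5) unfolding L_def by (auto intro: order_trans[OF Max_ge])
  have affine: "?E n = real (n + 1) * (1 - (\<Sum>x\<in>X. \<pi> x)) + ?S" if "L \<le> n" for n
    using expected_delta_affine[OF fac ne assms(2) assms(6,5,4) L[OF that]] .
  have "1 - (\<Sum>x\<in>X. \<pi> x) = 0"
    using affine_seq_slope_zero[of L ?E "1 - (\<Sum>x\<in>X. \<pi> x)" ?S "real d", OF affine]
      expected_delta_le_degree[OF fac ne assms(2,7)] expected_delta_mono[OF fac ne assms(2,6,5), of L 1]
    by simp
  then have stationary: "?E (m + n) = ?E n" if "L \<le> n" for m n using affine that by simp
  have full: "delta X w = d" if "w \<in> F" "length w = L" for w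
  proof (rule delta_eq_degree_if_left_stable[OF assms(1,6,5,7) that(1)])
    fix u assume "u @ w \<in> F"
    with that(2) show "delta X (u @ w) = delta X w"
      using delta_drop_eq_if_stationary[OF fac ne assms(2,6,5,3) stationary[of L "length u"], of "u @ w"]
      by simp
  qed
  then have "?E L = real d" by (rule expected_delta_eq_if_constant[OF fac ne assms(2)])
  then show ?thesis using affine[of L] \<open>1 - (\<Sum>x\<in>X. \<pi> x) = 0\<close> by simp
qed

end
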